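(* Let $n,c,s,p$ and $n_1,\dots,n_c$ be positive integers with $n_1\ge 2p$, $n_1\ge n_2\ge\cdots\ge n_c\ge p$ and $n_1+n_2+\cdots+n_c=n-s$. Then $$\lambda_1\big(D(K_s\vee(K_{n_1}+K_{n_2}+\cdots+K_{n_c}))\big)\ge \lambda_1\big(D(K_s\vee(K_{n-s-p(c-1)}+(c-1)K_p))\big),$$ with equality if and only if $(n_1,n_2,\dots,n_c)=(n-s-p(c-1),p,\dots,p)$.
   Context: For a connected graph $G$, $D(G)$ is the distance matrix and $\lambda_1(D(G))$ its largest eigenvalue (distance spectral radius). $K_m$ is the complete graph on $m$ vertices, $+$ denotes disjoint union, $(c-1)K_p$ is $c-1$ disjoint copies of $K_p$, and $G_1\vee G_2$ is the join of $G_1$ and $G_2$ (disjoint union plus all edges between them). *)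

theory Defs
  imports "Jordan_Normal_Form.Char_Poly"
begin

text \<open>A finite simple graph on the vertex set {0..<n}, given by its number of
  vertices and a symmetric irreflexive adjacency relation on {0..<n}.\<close>
type_synonym sgraph = "nat \<times> (nat \<Rightarrow> nat \<Rightarrow> bool)"

definition complete_graph :: "nat \<Rightarrow> sgraph" where
  "complete_graph m = (m, \<lambda>i j. i < m \<and> j < m \<and> i \<noteq> j)"

definition gunion :: "sgraph \<Rightarrow> sgraph \<Rightarrow> sgraph" where
  "gunion G H = (fst G + fst H,
     \<lambda>i j. (i < fst G \<and> j < fst G \<and> snd G i j) \<or>
           (fst G \<le> i \<and> fst G \<le> j \<and> snd H (i - fst G) (j - fst G)))"

definition gjoin :: "sgraph \<Rightarrow> sgraph \<Rightarrow> sgraph" where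
  "gjoin G H = (fst G + fst H,
     \<lambda>i j. snd (gunion G H) i j \<or>
           (i < fst G \<and> fst G \<le> j \<and> j < fst G + fst H) \<or>
           (j < fst G \<and> fst G \<le> i \<and> i < fst G + fst H))"

definition empty_graph :: sgraph where
  "empty_graph = (0, \<lambda>_ _. False)"

definition union_cliques :: "nat list \<Rightarrow> sgraph" where
  "union_cliques ns = foldr (\<lambda>m G. gunion (complete_graph m) G) ns empty_graph"

fun walk :: "sgraph \<Rightarrow> nat \<Rightarrow> nat \<Rightarrow> nat \<Rightarrow> bool" where
  "walk G 0 u v = (u = v \<and> u < fst G)"
| "walk G (Suc k) u v = (\<exists>w. u < fst G \<and> snd G u w \<and> walk G k w v)"

text \<open>Graph distance (length of a shortest walk); meaningful for connected graphs.\<close>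
definition gdist :: "sgraph \<Rightarrow> nat \<Rightarrow> nat \<Rightarrow> nat" where
  "gdist G u v = (LEAST k. walk G k u v)"

definition distance_matrix :: "sgraph \<Rightarrow> real mat" where
  "distance_matrix G = mat (fst G) (fst G) (\<lambda>(i, j). real (gdist G i j))"

definition largest_eigenvalue :: "real mat \<Rightarrow> real" where
  "largest_eigenvalue A = Max {k. eigenvalue A k}"

end

theory Submission
  imports Defs
begin

text \<open>The graph K_s \<or> (K_{n_1} + ... + K_{n_c}) has diameter at most 2, and its distance matrix
  has a positive eigenvector that is constant on K_s and on every clique. For a symmetric
  nonnegative matrix a positive eigenvector belongs to the largest eigenvalue, so solving the
  eigen-equations for such a vector shows that the distance spectral radius is the unique root
  l > s - 1 of F(l) = (2 + s/(l - s + 1)) \<Sum>_k n_k/(l + n_k + 1) = 1, and F is strictly decreasing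
  there. All n_k lie in [p, N] with N = n - s - p(c - 1) and their sum is fixed; since
  t \<mapsto> t/(l + t + 1) is concave, the sum in F lies above the one for the extreme sizes
  (N, p, ..., p), strictly unless the sizes are extreme. Evaluating F at the root of the extremal
  graph gives the inequality and its equality case.\<close>

lemma mat_vec_nth_sum:
  assumes "A \<in> carrier_mat N N" "v \<in> carrier_vec N" "i < N"
  shows "(A *\<^sub>v v) $ i = (\<Sum>j<N. A $$ (i, j) * v $ j)"
  using assms by (auto simp: scalar_prod_def lessThan_atLeast0 intro!: sum.cong)

lemma finite_eigenvalues:
  fixes A :: "'a::field mat"
  assumes "A \<in> carrier_mat N N"
  shows "finite {k. eigenvalue A k}"
proof -
  have "char_poly A \<noteq> 0" using degree_monic_char_poly[OF assms] by auto
  then have "finite {k. poly (char_poly A) k = 0}" by (rule poly_roots_finite)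
  then show ?thesis using eigenvalue_root_char_poly[OF assms] by simp
qed

lemma abs_eigenvalue_le_positive_eigenvalue:
  fixes A :: "real mat"
  assumes A: "A \<in> carrier_mat N N"
    and sym: "\<And>i j. i < N \<Longrightarrow> j < N \<Longrightarrow> A $$ (i, j) = A $$ (j, i)"
    and nonneg: "\<And>i j. i < N \<Longrightarrow> j < N \<Longrightarrow> 0 \<le> A $$ (i, j)"
    and x: "x \<in> carrier_vec N" "\<And>i. i < N \<Longrightarrow> 0 < x $ i" "A *\<^sub>v x = lam \<cdot>\<^sub>v x"
    and mu: "eigenvalue A mu"
  shows "\<bar>mu\<bar> \<le> lam"
proof -
  obtain v where v: "v \<in> carrier_vec N" "v \<noteq> 0\<^sub>v N" "A *\<^sub>v v = mu \<cdot>\<^sub>v v"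
    using mu A unfolding eigenvalue_def eigenvector_def by auto
  have row_bound: "\<bar>mu\<bar> * \<bar>v $ i\<bar> \<le> (\<Sum>j<N. A $$ (i, j) * \<bar>v $ j\<bar>)" if i: "i < N" for i
  proof -
    have "mu * v $ i = (\<Sum>j<N. A $$ (i, j) * v $ j)"
      using v mat_vec_nth_sum[OF A v(1) i] i by simp
    then have "\<bar>mu\<bar> * \<bar>v $ i\<bar> = \<bar>\<Sum>j<N. A $$ (i, j) * v $ j\<bar>"
      by (metis abs_mult)
    also have "\<dots> \<le> (\<Sum>j<N. \<bar>A $$ (i, j) * v $ j\<bar>)" by (rule sum_abs)
    also have "\<dots> = (\<Sum>j<N. A $$ (i, j) * \<bar>v $ j\<bar>)"
      using nonneg i by (intro sum.cong) (auto simp: abs_mult)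
    finally show ?thesis .
  qed
  define w where "w = (\<Sum>i<N. x $ i * \<bar>v $ i\<bar>)"
  \<comment> \<open>By symmetry, x is also a left eigenvector, which is paired with the row bounds.\<close>
  have "\<bar>mu\<bar> * w = (\<Sum>i<N. x $ i * (\<bar>mu\<bar> * \<bar>v $ i\<bar>))"
    by (simp add: w_def sum_distrib_left mult_ac)
  also have "\<dots> \<le> (\<Sum>i<N. x $ i * (\<Sum>j<N. A $$ (i, j) * \<bar>v $ j\<bar>))"
    using row_bound x(2) by (intro sum_mono mult_left_mono) (auto simp: less_imp_le)
  also have "\<dots> = (\<Sum>i<N. \<Sum>j<N. x $ i * A $$ (i, j) * \<bar>v $ j\<bar>)"
    by (simp add: sum_distrib_left mult.assoc)
  also have "\<dots> = (\<Sum>j<N. \<Sum>i<N. x $ i * A $$ (i, j) * \<bar>v $ j\<bar>)"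
    by (rule sum.swap)
  also have "\<dots> = (\<Sum>j<N. \<bar>v $ j\<bar> * (\<Sum>i<N. A $$ (j, i) * x $ i))"
    unfolding sum_distrib_left by (intro sum.cong refl) (simp add: sym mult_ac)
  also have "\<dots> = (\<Sum>j<N. \<bar>v $ j\<bar> * (lam * x $ j))"
  proof (intro sum.cong refl)
    fix j assume "j \<in> {..<N}"
    then have "(\<Sum>i<N. A $$ (j, i) * x $ i) = lam * x $ j"
      using mat_vec_nth_sum[OF A x(1)] x(1,3) by (metis carrier_vecD index_smult_vec(1) lessThan_iff)
    then show "\<bar>v $ j\<bar> * (\<Sum>i<N. A $$ (j, i) * x $ i) = \<bar>v $ j\<bar> * (lam * x $ j)" by simp
  qed
  also have "\<dots> = lam * w" by (simp add: w_def sum_distrib_left mult_ac)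
  finally have le: "\<bar>mu\<bar> * w \<le> lam * w" .
  obtain k where k: "k < N" "v $ k \<noteq> 0"
    using v by (metis carrier_vecD eq_vecI index_zero_vec)
  have "0 < x $ k * \<bar>v $ k\<bar>" using x(2)[OF k(1)] k(2) by simp
  also have "\<dots> \<le> w"
    unfolding w_def using k(1) x(2) by (intro member_le_sum) (auto simp: less_imp_le)
  finally show ?thesis using le by simp
qed

lemma largest_eigenvalue_eq_positive_eigenvalue:
  fixes A :: "real mat"
  assumes A: "A \<in> carrier_mat N N" and N: "0 < N"
    and sym: "\<And>i j. i < N \<Longrightarrow> j < N \<Longrightarrow> A $$ (i, j) = A $$ (j, i)"
    and nonneg: "\<And>i j. i < N \<Longrightarrow> j < N \<Longrightarrow> 0 \<le> A $$ (i, j)"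
    and x: "x \<in> carrier_vec N" "\<And>i. i < N \<Longrightarrow> 0 < x $ i" "A *\<^sub>v x = lam \<cdot>\<^sub>v x"
  shows "largest_eigenvalue A = lam"
proof -
  have "x \<noteq> 0\<^sub>v N" using x(2)[OF N] N by auto
  then have "eigenvalue A lam" using A x unfolding eigenvalue_def eigenvector_def by auto
  moreover have "mu \<le> lam" if "eigenvalue A mu" for mu
    using abs_eigenvalue_le_positive_eigenvalue[OF A sym nonneg x that] by linarith
  ultimately show ?thesis
    unfolding largest_eigenvalue_def by (intro Max_eqI finite_eigenvalues[OF A]) auto
qed

lemma sum_lessThan_add:
  fixes f :: "nat \<Rightarrow> 'a::comm_monoid_add"
  shows "(\<Sum>i<m + k. f i) = (\<Sum>i<m. f i) + (\<Sum>i<k. f (m + i))"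
  by (induction k) (auto simp: add_ac)

fun clique_index :: "nat list \<Rightarrow> nat \<Rightarrow> nat" where
  "clique_index [] i = 0"
| "clique_index (m # ms) i = (if i < m then 0 else Suc (clique_index ms (i - m)))"

lemma clique_index_less_length: "i < sum_list ns \<Longrightarrow> clique_index ns i < length ns"
  by (induction ns arbitrary: i) auto

lemma sum_clique_index:
  fixes f :: "nat \<Rightarrow> 'a::comm_semiring_1"
  shows "(\<Sum>i<sum_list ns. f (clique_index ns i)) = (\<Sum>k<length ns. of_nat (ns ! k) * f k)"
proof (induction ns arbitrary: f)
  case Nil
  then show ?case by simp
next
  case (Cons m ms)
  have "(\<Sum>i<sum_list (m # ms). f (clique_index (m # ms) i))
      = of_nat m * f 0 + (\<Sum>i<sum_list ms. f (Suc (clique_index ms i)))"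
    by (simp add: sum_lessThan_add)
  also have "\<dots> = (\<Sum>k<length (m # ms). of_nat ((m # ms) ! k) * f k)"
    using Cons[of "\<lambda>k. f (Suc k)"] by (subst length_Cons, subst sum.lessThan_Suc_shift) simp
  finally show ?case .
qed

lemma fst_union_cliques: "fst (union_cliques ns) = sum_list ns"
  by (induction ns) (auto simp: union_cliques_def gunion_def complete_graph_def empty_graph_def)

lemma snd_union_cliques:
  "snd (union_cliques ns) i j \<longleftrightarrow>
     i < sum_list ns \<and> j < sum_list ns \<and> i \<noteq> j \<and> clique_index ns i = clique_index ns j"
proof (induction ns arbitrary: i j)
  case Nil
  then show ?case by (simp add: union_cliques_def empty_graph_def)
next
  case (Cons m ms)
  have "union_cliques (m # ms) = gunion (complete_graph m) (union_cliques ms)"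
    by (simp add: union_cliques_def)
  then show ?case using Cons[of "i - m" "j - m"]
    by (auto simp: gunion_def complete_graph_def fst_union_cliques)
qed

definition join_cliques :: "nat \<Rightarrow> nat list \<Rightarrow> sgraph" where
  "join_cliques s ns = gjoin (complete_graph s) (union_cliques ns)"

lemma fst_join_cliques: "fst (join_cliques s ns) = s + sum_list ns"
  by (simp add: join_cliques_def gjoin_def complete_graph_def fst_union_cliques)

lemma snd_join_cliques:
  "snd (join_cliques s ns) i j \<longleftrightarrow> i < s + sum_list ns \<and> j < s + sum_list ns \<and> i \<noteq> j \<and>
     (i < s \<or> j < s \<or> clique_index ns (i - s) = clique_index ns (j - s))"
  unfolding join_cliques_def gjoin_def gunion_def
  by (auto simp: complete_graph_def fst_union_cliques snd_union_cliques)

lemma gdist_self: "u < fst G \<Longrightarrow> gdist G u u = 0"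
  unfolding gdist_def by (intro Least_equality) auto

lemma gdist_adjacent:
  assumes "u \<noteq> v" "u < fst G" "v < fst G" "snd G u v"
  shows "gdist G u v = 1"
  unfolding gdist_def
proof (intro Least_equality)
  show "walk G 1 u v" using assms by auto
  fix k assume "walk G k u v"
  then show "1 \<le> k" using assms(1) by (cases k) auto
qed

lemma gdist_common_neighbour:
  assumes "u \<noteq> v" "\<not> snd G u v" "u < fst G" "w < fst G" "v < fst G" "snd G u w" "snd G w v"
  shows "gdist G u v = 2"
  unfolding gdist_def
proof (intro Least_equality)
  show "walk G 2 u v" using assms by (auto simp: numeral_2_eq_2)
  fix k assume k: "walk G k u v"
  show "2 \<le> k"
  proof (rule ccontr)
    assume "\<not> 2 \<le> k"
    then have "k = 0 \<or> k = 1" by auto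
    then show False using k assms(1,2) by auto
  qed
qed

lemma gdist_join_cliques:
  assumes s: "0 < s" and i: "i < s + sum_list ns" and j: "j < s + sum_list ns"
  shows "gdist (join_cliques s ns) i j = (if i = j then 0 else
           if i < s \<or> j < s \<or> clique_index ns (i - s) = clique_index ns (j - s) then 1 else 2)"
  using gdist_self[of i "join_cliques s ns"] gdist_adjacent[of i j "join_cliques s ns"]
    gdist_common_neighbour[of i j "join_cliques s ns" 0] assms
  by (auto simp: fst_join_cliques snd_join_cliques)

definition block_vector :: "nat \<Rightarrow> nat list \<Rightarrow> real \<Rightarrow> (nat \<Rightarrow> real) \<Rightarrow> nat \<Rightarrow> real" where
  "block_vector s ns a y i = (if i < s then a else y (clique_index ns (i - s)))"

lemma distance_row_sum_apex:
  assumes s: "0 < s" and i: "i < s"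
  shows "(\<Sum>j<s + sum_list ns. real (gdist (join_cliques s ns) i j) * block_vector s ns a y j)
       = (real s - 1) * a + (\<Sum>k<length ns. real (ns ! k) * y k)"
proof -
  have "(\<Sum>j<s. real (gdist (join_cliques s ns) i j) * block_vector s ns a y j)
      = (\<Sum>j<s. a - (if j = i then a else 0))"
    using s i by (intro sum.cong) (auto simp: gdist_join_cliques block_vector_def)
  also have "\<dots> = (real s - 1) * a" using i by (simp add: sum_subtractf algebra_simps)
  finally have apex: "(\<Sum>j<s. real (gdist (join_cliques s ns) i j) * block_vector s ns a y j)
      = (real s - 1) * a" .
  have "(\<Sum>t<sum_list ns. real (gdist (join_cliques s ns) i (s + t)) * block_vector s ns a y (s + t))
      = (\<Sum>t<sum_list ns. y (clique_index ns t))"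
    using s i by (intro sum.cong) (auto simp: gdist_join_cliques block_vector_def)
  also have "\<dots> = (\<Sum>k<length ns. real (ns ! k) * y k)" by (rule sum_clique_index)
  finally show ?thesis by (simp add: sum_lessThan_add apex)
qed

lemma distance_row_sum_clique:
  assumes s: "0 < s" and t: "t < sum_list ns"
  defines "b \<equiv> clique_index ns t"
  shows "(\<Sum>j<s + sum_list ns. real (gdist (join_cliques s ns) (s + t) j) * block_vector s ns a y j)
       = real s * a + 2 * (\<Sum>k<length ns. real (ns ! k) * y k) - (real (ns ! b) + 1) * y b"
proof -
  define g where "g k = (if k = b then 1 else 2) * y k" for k
  have apex: "(\<Sum>j<s. real (gdist (join_cliques s ns) (s + t) j) * block_vector s ns a y j)
      = real s * a"
    using s t by (simp add: gdist_join_cliques block_vector_def)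
  have "(\<Sum>u<sum_list ns. real (gdist (join_cliques s ns) (s + t) (s + u)) * block_vector s ns a y (s + u))
      = (\<Sum>u<sum_list ns. g (clique_index ns u) - (if u = t then y b else 0))"
    using s t by (intro sum.cong) (auto simp: gdist_join_cliques block_vector_def g_def b_def)
  also have "\<dots> = (\<Sum>k<length ns. real (ns ! k) * g k) - y b"
    using t by (simp add: sum_subtractf sum_clique_index)
  also have "(\<Sum>k<length ns. real (ns ! k) * g k)
      = (\<Sum>k<length ns. 2 * (real (ns ! k) * y k) - (if k = b then real (ns ! k) * y k else 0))"
    by (intro sum.cong) (auto simp: g_def)
  also have "\<dots> = 2 * (\<Sum>k<length ns. real (ns ! k) * y k) - real (ns ! b) * y b"
    using clique_index_less_length[OF t] by (simp add: sum_subtractf sum_distrib_left b_def)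
  finally have cliques:
    "(\<Sum>u<sum_list ns. real (gdist (join_cliques s ns) (s + t) (s + u)) * block_vector s ns a y (s + u))
      = 2 * (\<Sum>k<length ns. real (ns ! k) * y k) - real (ns ! b) * y b - y b" .
  show ?thesis unfolding sum_lessThan_add apex cliques by (simp add: algebra_simps)
qed

definition block_sum :: "nat list \<Rightarrow> real \<Rightarrow> real" where
  "block_sum ns l = (\<Sum>k<length ns. real (ns ! k) / (l + real (ns ! k) + 1))"

text \<open>An eigenvector for the eigenvalue l with value a on K_s and y_k on the k-th clique,
  normalised by \<Sum>_k n_k y_k = 1, must have a = 1/(l - s + 1) and y_k = (s a + 2)/(l + n_k + 1);
  the normalisation then becomes secular s ns l = 1.\<close>

definition secular :: "nat \<Rightarrow> nat list \<Rightarrow> real \<Rightarrow> real" where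
  "secular s ns l = (2 + real s / (l - real s + 1)) * block_sum ns l"

lemma distance_matrix_join_cliques:
  "distance_matrix (join_cliques s ns) \<in> carrier_mat (s + sum_list ns) (s + sum_list ns)"
  "i < s + sum_list ns \<Longrightarrow> j < s + sum_list ns \<Longrightarrow>
     distance_matrix (join_cliques s ns) $$ (i, j) = real (gdist (join_cliques s ns) i j)"
  by (auto simp: distance_matrix_def fst_join_cliques)

lemma join_cliques_eigenvector:
  assumes s: "0 < s" and l: "real s - 1 < l" and root: "secular s ns l = 1"
  defines "a \<equiv> 1 / (l - real s + 1)"
    and "y \<equiv> \<lambda>k. (real s / (l - real s + 1) + 2) / (l + real (ns ! k) + 1)"
  shows "distance_matrix (join_cliques s ns) *\<^sub>v vec (s + sum_list ns) (block_vector s ns a y)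
       = l \<cdot>\<^sub>v vec (s + sum_list ns) (block_vector s ns a y)"
proof (rule eq_vecI)
  fix i assume "i < dim_vec (l \<cdot>\<^sub>v vec (s + sum_list ns) (block_vector s ns a y))"
  then have i: "i < s + sum_list ns" by simp
  have a: "a * (l - real s + 1) = 1" using l by (simp add: a_def)
  have y: "y k * (l + real (ns ! k) + 1) = real s * a + 2" for k
    using l s by (simp add: y_def a_def add_pos_nonneg)
  have T: "(\<Sum>k<length ns. real (ns ! k) * y k) = 1"
  proof -
    have "(\<Sum>k<length ns. real (ns ! k) * y k) = (real s / (l - real s + 1) + 2) * block_sum ns l"
      by (simp add: y_def block_sum_def sum_distrib_left mult_ac)
    also have "\<dots> = secular s ns l" by (simp add: secular_def)
    finally show ?thesis using root by simp
  qed
  have "(distance_matrix (join_cliques s ns) *\<^sub>v vec (s + sum_list ns) (block_vector s ns a y)) $ i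
      = (\<Sum>j<s + sum_list ns. real (gdist (join_cliques s ns) i j) * block_vector s ns a y j)"
    using mat_vec_nth_sum[OF distance_matrix_join_cliques(1) _ i] i
    by (simp add: distance_matrix_join_cliques(2))
  also have "\<dots> = l * block_vector s ns a y i"
  proof (cases "i < s")
    case True
    then have "block_vector s ns a y i = a" by (simp add: block_vector_def)
    then show ?thesis
      using distance_row_sum_apex[OF s True, of ns a y] T a by (simp add: algebra_simps)
  next
    case False
    then obtain t where t: "i = s + t" "t < sum_list ns"
      using i by (metis add_less_cancel_left le_iff_add not_less)
    then have "block_vector s ns a y i = y (clique_index ns t)" by (simp add: block_vector_def)
    then show ?thesis
      using distance_row_sum_clique[OF s t(2), of a y] T y[of "clique_index ns t"] t(1)
      by (simp add: algebra_simps)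
  qed
  finally show "(distance_matrix (join_cliques s ns) *\<^sub>v vec (s + sum_list ns) (block_vector s ns a y)) $ i
      = (l \<cdot>\<^sub>v vec (s + sum_list ns) (block_vector s ns a y)) $ i"
    using i by simp
qed (simp add: distance_matrix_def fst_join_cliques)

lemma largest_eigenvalue_join_cliques:
  assumes s: "0 < s" and l: "real s - 1 < l" and root: "secular s ns l = 1"
  shows "largest_eigenvalue (distance_matrix (join_cliques s ns)) = l"
proof (rule largest_eigenvalue_eq_positive_eigenvalue
    [OF distance_matrix_join_cliques(1) _ _ _ _ _ join_cliques_eigenvector[OF s l root]])
  let ?a = "1 / (l - real s + 1)"
  show "0 < s + sum_list ns" using s by simp
  show "distance_matrix (join_cliques s ns) $$ (i, j) = distance_matrix (join_cliques s ns) $$ (j, i)"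
    if "i < s + sum_list ns" "j < s + sum_list ns" for i j
    using that s by (auto simp: distance_matrix_join_cliques(2) gdist_join_cliques)
  show "0 \<le> distance_matrix (join_cliques s ns) $$ (i, j)"
    if "i < s + sum_list ns" "j < s + sum_list ns" for i j
    using that by (simp add: distance_matrix_join_cliques(2))
  have a: "0 < ?a" using l by simp
  have y: "0 < (real s / (l - real s + 1) + 2) / (l + real (ns ! k) + 1)" for k
    using l s by (intro divide_pos_pos add_nonneg_pos) auto
  show "0 < vec (s + sum_list ns)
      (block_vector s ns ?a (\<lambda>k. (real s / (l - real s + 1) + 2) / (l + real (ns ! k) + 1))) $ i"
    if "i < s + sum_list ns" for i
    using that a y by (simp add: block_vector_def)
qed simp

lemma block_sum_ge:
  assumes "-1 < l"
  shows "real (sum_list ns) / (l + real (sum_list ns) + 1) \<le> block_sum ns l"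
proof -
  have "real (sum_list ns) / (l + real (sum_list ns) + 1)
      = (\<Sum>k<length ns. real (ns ! k) / (l + real (sum_list ns) + 1))"
    by (simp add: sum_list_sum_nth atLeast0LessThan sum_divide_distrib)
  also have "\<dots> \<le> block_sum ns l"
    unfolding block_sum_def using assms elem_le_sum_list[of _ ns]
    by (intro sum_mono divide_left_mono) (auto intro!: mult_pos_pos add_pos_nonneg)
  finally show ?thesis .
qed

lemma block_sum_le:
  assumes "-1 < l"
  shows "block_sum ns l \<le> real (sum_list ns) / (l + 1)"
proof -
  have "block_sum ns l \<le> (\<Sum>k<length ns. real (ns ! k) / (l + 1))"
    unfolding block_sum_def using assms
    by (intro sum_mono divide_left_mono) (auto intro!: mult_pos_pos add_pos_nonneg)
  also have "\<dots> = real (sum_list ns) / (l + 1)"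
    by (simp add: sum_list_sum_nth atLeast0LessThan sum_divide_distrib)
  finally show ?thesis .
qed

lemma block_sum_antimono:
  assumes "-1 < l1" "l1 \<le> l2"
  shows "block_sum ns l2 \<le> block_sum ns l1"
  unfolding block_sum_def using assms
  by (intro sum_mono divide_left_mono) (auto intro!: mult_pos_pos add_pos_nonneg)

lemma block_sum_pos:
  assumes "0 < sum_list ns" "-1 < l"
  shows "0 < block_sum ns l"
  using block_sum_ge[OF assms(2), of ns] assms by (smt (verit) divide_pos_pos of_nat_0_less_iff)

lemma isCont_secular: "real s - 1 < l \<Longrightarrow> isCont (secular s ns) l"
  unfolding secular_def block_sum_def by (intro continuous_intros) auto

lemma secular_strict_antimono:
  assumes s: "0 < s" and ns: "0 < sum_list ns" and l: "real s - 1 < l1" "l1 < l2"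
  shows "secular s ns l2 < secular s ns l1"
proof -
  have factor: "0 < 2 + real s / (l2 - real s + 1)"
    "2 + real s / (l2 - real s + 1) < 2 + real s / (l1 - real s + 1)"
    using s l by (auto intro!: add_pos_nonneg divide_strict_left_mono)
  have "secular s ns l2 < (2 + real s / (l1 - real s + 1)) * block_sum ns l2"
    unfolding secular_def using factor block_sum_pos[OF ns, of l2] l by simp
  also have "\<dots> \<le> secular s ns l1"
    unfolding secular_def using factor block_sum_antimono[of l1 l2 ns] l
    by (intro mult_left_mono) auto
  finally show ?thesis .
qed

lemma secular_root_exists:
  assumes s: "0 < s" and ns: "0 < sum_list ns"
  shows "\<exists>l > real s - 1. secular s ns l = 1"
proof -
  define S where "S = real (sum_list ns)"
  define lo where "lo = real s - 1 / 2"
  define hi where "hi = 3 * S + 2 * real s"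
  have S: "1 \<le> S" using ns by (simp add: S_def)
  have "real s \<le> S * real s" using mult_right_mono[OF S, of "real s"] by simp
  then have "1 \<le> (2 + 2 * real s) * (S / (lo + S + 1))"
    using S by (simp add: lo_def field_simps)
  also have "\<dots> \<le> (2 + 2 * real s) * block_sum ns lo"
    using block_sum_ge[of lo ns] s by (intro mult_left_mono) (auto simp: lo_def S_def)
  also have "\<dots> = secular s ns lo" by (simp add: secular_def lo_def)
  finally have lo_ge: "1 \<le> secular s ns lo" .
  have "secular s ns hi \<le> 3 * (S / (hi + 1))"
    unfolding secular_def S_def
  proof (rule mult_mono)
    show "2 + real s / (hi - real s + 1) \<le> 3" using S by (simp add: hi_def field_simps)
    show "block_sum ns hi \<le> real (sum_list ns) / (hi + 1)"
      using S by (intro block_sum_le) (simp add: hi_def)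
    show "0 \<le> block_sum ns hi" using block_sum_pos[OF ns, of hi] S by (simp add: hi_def)
  qed simp
  also have "\<dots> \<le> 1" using S by (simp add: hi_def field_simps)
  finally have hi_le: "secular s ns hi \<le> 1" .
  have "lo \<le> hi" "real s - 1 < lo" using S by (auto simp: lo_def hi_def)
  then obtain l where "lo \<le> l" "l \<le> hi" "secular s ns l = 1"
    using IVT2[of "secular s ns" hi 1 lo] lo_ge hi_le isCont_secular by force
  then show ?thesis using \<open>real s - 1 < lo\<close> by (intro exI[of _ l]) auto
qed

text \<open>The gap between t/(L + t + 1) and its chord through p and M has the sign of (t - p)(M - t).\<close>

lemma frac_chord_gap:
  fixes L p t M :: real
  assumes "-1 < L" "0 \<le> p" "0 \<le> t" "0 \<le> M"
  shows "t / (L + t + 1) - (p / (L + p + 1) + (t - p) * ((L + 1) / ((L + M + 1) * (L + p + 1))))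
       = (t - p) * (L + 1) * (M - t) / ((L + p + 1) * (L + t + 1) * (L + M + 1))"
proof -
  define A B C where "A = L + t + 1" and "B = L + p + 1" and "C = L + M + 1"
  have ABC: "A \<noteq> 0" "B \<noteq> 0" "C \<noteq> 0" using assms by (auto simp: A_def B_def C_def)
  have "t / A - (p / B + (t - p) * ((L + 1) / (C * B)))
      = ((t * B - p * A) * C - (t - p) * (L + 1) * A) / (A * B * C)"
    using ABC by (simp add: field_simps)
  also have "(t * B - p * A) * C - (t - p) * (L + 1) * A = (t - p) * (L + 1) * (M - t)"
    by (simp add: A_def B_def C_def algebra_simps)
  finally show ?thesis by (simp add: A_def B_def C_def mult_ac)
qed

lemma sum_above_chord:
  fixes f :: "real \<Rightarrow> real" and x :: "nat \<Rightarrow> real"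
  assumes c: "0 < c"
    and chord: "\<And>t. p \<le> t \<Longrightarrow> t \<le> M \<Longrightarrow> f p + (t - p) * K \<le> f t"
    and endpoint: "f M = f p + (M - p) * K"
    and x: "\<And>k. k < c \<Longrightarrow> p \<le> x k \<and> x k \<le> M"
    and sum: "(\<Sum>k<c. x k) = M + real (c - 1) * p"
  shows "f M + real (c - 1) * f p \<le> (\<Sum>k<c. f (x k))"
    and "\<lbrakk>j < c; p < x j; x j < M; \<And>t. p < t \<Longrightarrow> t < M \<Longrightarrow> f p + (t - p) * K < f t\<rbrakk>
         \<Longrightarrow> f M + real (c - 1) * f p < (\<Sum>k<c. f (x k))"
proof -
  have "(\<Sum>k<c. f p + (x k - p) * K) = real c * f p + ((\<Sum>k<c. x k) - real c * p) * K"
    by (simp add: sum.distrib sum_subtractf flip: sum_distrib_right)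
  also have "\<dots> = f M + real (c - 1) * f p"
    using c by (simp add: sum endpoint of_nat_diff algebra_simps)
  finally have chord_sum: "(\<Sum>k<c. f p + (x k - p) * K) = f M + real (c - 1) * f p" .
  show "f M + real (c - 1) * f p \<le> (\<Sum>k<c. f (x k))"
    unfolding chord_sum[symmetric] using chord x by (intro sum_mono) auto
  show "f M + real (c - 1) * f p < (\<Sum>k<c. f (x k))"
    if "j < c" "p < x j" "x j < M" "\<And>t. p < t \<Longrightarrow> t < M \<Longrightarrow> f p + (t - p) * K < f t"
    unfolding chord_sum[symmetric] using chord x that by (intro sum_strict_mono_ex1) auto
qed

lemma secular_extremal_le:
  fixes ns :: "nat list"
  assumes s: "0 < s" and l: "real s - 1 < l" and c: "0 < c" "length ns = c"
    and range: "\<forall>k<c. p \<le> ns ! k \<and> ns ! k \<le> M"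
    and sum: "sum_list ns = M + (c - 1) * p"
  shows "secular s (M # replicate (c - 1) p) l \<le> secular s ns l"
    and "\<lbrakk>j < c; p < ns ! j; ns ! j < M\<rbrakk>
         \<Longrightarrow> secular s (M # replicate (c - 1) p) l < secular s ns l"
proof -
  define f where "f t = t / (l + t + 1)" for t
  define K where "K = (l + 1) / ((l + real M + 1) * (l + real p + 1))"
  have l0: "-1 < l" using l by simp
  have gap: "f t - (f (real p) + (t - real p) * K)
      = (t - real p) * (l + 1) * (real M - t) / ((l + real p + 1) * (l + t + 1) * (l + real M + 1))"
    if "0 \<le> t" for t
    unfolding f_def K_def using frac_chord_gap[OF l0 _ that] by simp
  have chord: "f (real p) + (t - real p) * K \<le> f t" if "real p \<le> t" "t \<le> real M" for t
    using gap[of t] that l0 by (smt (verit) divide_nonneg_pos mult_nonneg_nonneg mult_pos_pos of_nat_0_le_iff)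
  have chord_strict: "f (real p) + (t - real p) * K < f t" if "real p < t" "t < real M" for t
    using gap[of t] that l0 by (smt (verit) divide_pos_pos mult_pos_pos of_nat_0_le_iff)
  have endpoint: "f (real M) = f (real p) + (real M - real p) * K" using gap[of "real M"] by simp
  have x: "real p \<le> real (ns ! k) \<and> real (ns ! k) \<le> real M" if "k < c" for k
    using range that by simp
  have x_sum: "(\<Sum>k<c. real (ns ! k)) = real M + real (c - 1) * real p"
    using sum c(2) by (simp flip: of_nat_sum add: sum_list_sum_nth atLeast0LessThan)
  have extremal: "block_sum (M # replicate (c - 1) p) l = f (real M) + real (c - 1) * f (real p)"
    unfolding block_sum_def f_def by (subst length_Cons, subst sum.lessThan_Suc_shift) simp
  have block_sum: "block_sum ns l = (\<Sum>k<c. f (real (ns ! k)))"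
    unfolding block_sum_def f_def c(2) ..
  have factor: "0 < 2 + real s / (l - real s + 1)" using l by (simp add: add_pos_nonneg)
  note bounds = sum_above_chord[of c "real p" "real M" f K "\<lambda>k. real (ns ! k)", OF c(1) chord endpoint x x_sum]
  show "secular s (M # replicate (c - 1) p) l \<le> secular s ns l"
    unfolding secular_def extremal block_sum using bounds(1) factor by simp
  show "secular s (M # replicate (c - 1) p) l < secular s ns l"
    if "j < c" "p < ns ! j" "ns ! j < M"
    unfolding secular_def extremal block_sum using bounds(2)[of j] that chord_strict factor by simp
qed

lemma descending_block_sizes:
  fixes ns :: "nat list"
  assumes len: "length ns = c" and c: "0 < c"
    and desc: "\<forall>i j. i \<le> j \<longrightarrow> j < c \<longrightarrow> ns ! j \<le> ns ! i" and last: "p \<le> ns ! (c - 1)"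
  defines "M \<equiv> sum_list ns - p * (c - 1)"
  shows "\<forall>k<c. p \<le> ns ! k \<and> ns ! k \<le> M"
    and "sum_list ns = M + (c - 1) * p"
    and "ns \<noteq> M # replicate (c - 1) p \<Longrightarrow> \<exists>j<c. p < ns ! j \<and> ns ! j < M"
proof -
  obtain c' where c': "c = Suc c'" using c by (cases c) auto
  have ge: "p \<le> ns ! k" if "k < c" for k
  proof -
    have "ns ! (c - 1) \<le> ns ! k" using desc that c by simp
    with last show ?thesis by simp
  qed
  define E where "E = (\<Sum>k<c. ns ! k - p)"
  have excess_le: "(\<Sum>k\<in>J. ns ! k - p) \<le> E" if "J \<subseteq> {..<c}" for J
    unfolding E_def using that by (intro sum_mono2) auto
  have "sum_list ns = (\<Sum>k<c. p + (ns ! k - p))"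
    using len ge by (simp add: sum_list_sum_nth atLeast0LessThan)
  then have sum_E: "sum_list ns = c * p + E" by (simp add: sum.distrib E_def)
  then have M: "M = p + E" by (simp add: M_def c')
  show sum: "sum_list ns = M + (c - 1) * p" using sum_E M c' by simp
  show "\<forall>k<c. p \<le> ns ! k \<and> ns ! k \<le> M"
  proof (intro allI impI)
    fix k assume "k < c"
    then show "p \<le> ns ! k \<and> ns ! k \<le> M" using ge excess_le[of "{k}"] M by auto
  qed
  show "\<exists>j<c. p < ns ! j \<and> ns ! j < M" if ne: "ns \<noteq> M # replicate (c - 1) p"
  proof -
    have "\<exists>j. 0 < j \<and> j < c \<and> p < ns ! j"
    proof (rule ccontr)
      assume "\<nexists>j. 0 < j \<and> j < c \<and> p < ns ! j"
      then have tail: "ns ! j = p" if "0 < j" "j < c" for j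
        using ge that by (meson le_antisym not_less)
      have "E = ns ! 0 - p"
        unfolding E_def c' sum.lessThan_Suc_shift using tail c' by simp
      then have "ns ! 0 = M" using M ge[OF c] by simp
      then have "ns = M # replicate (c - 1) p"
        using tail len c by (intro nth_equalityI) (auto simp: nth_Cons')
      with ne show False by simp
    qed
    then obtain j where j: "0 < j" "j < c" "p < ns ! j" by blast
    have "ns ! j \<le> ns ! 0" using desc j by auto
    moreover have "(ns ! 0 - p) + (ns ! j - p) \<le> E" using excess_le[of "{0, j}"] j by auto
    ultimately have "ns ! j < M" using M j by linarith
    with j show ?thesis by blast
  qed
qed

theorem lemma3p1:
  fixes n c s p :: nat and ns :: "nat list"
  assumes "n > 0" "c > 0" "s > 0" "p > 0"
    and "length ns = c"
    and "\<forall>i < c. ns ! i > 0"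
    and "ns ! 0 \<ge> 2 * p"
    and "\<forall>i j. i \<le> j \<longrightarrow> j < c \<longrightarrow> ns ! j \<le> ns ! i"
    and "ns ! (c - 1) \<ge> p"
    and "sum_list ns = n - s"
  shows "largest_eigenvalue (distance_matrix (gjoin (complete_graph s) (union_cliques ns)))
           \<ge> largest_eigenvalue (distance_matrix (gjoin (complete_graph s)
                (union_cliques ((n - s - p * (c - 1)) # replicate (c - 1) p))))
    \<and> (largest_eigenvalue (distance_matrix (gjoin (complete_graph s) (union_cliques ns)))
           = largest_eigenvalue (distance_matrix (gjoin (complete_graph s)
                (union_cliques ((n - s - p * (c - 1)) # replicate (c - 1) p))))
       \<longleftrightarrow> ns = (n - s - p * (c - 1)) # replicate (c - 1) p)"
proof -
  define M where "M = n - s - p * (c - 1)"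
  define ext where "ext = M # replicate (c - 1) p"
  have M: "M = sum_list ns - p * (c - 1)" using assms(10) by (simp add: M_def)
  note sizes = descending_block_sizes[OF assms(5,2,8,9), folded M]
  have "p \<le> M" using sizes(1) assms(2) by auto
  then have pos: "0 < sum_list ns" "0 < sum_list ext"
    using sizes(2) assms(4) by (auto simp: ext_def)
  obtain lG where lG: "real s - 1 < lG" "secular s ns lG = 1"
    using secular_root_exists[OF assms(3) pos(1)] by blast
  obtain lE where lE: "real s - 1 < lE" "secular s ext lE = 1"
    using secular_root_exists[OF assms(3) pos(2)] by blast
  note comparison = secular_extremal_le[OF assms(3) lE(1) assms(2,5) sizes(1,2), folded ext_def]
  have "lE \<le> lG"
    using secular_strict_antimono[OF assms(3) pos(1) lG(1), of lE] comparison(1) lG lE by fastforce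
  moreover have "lE < lG" if ne: "ns \<noteq> ext"
  proof (rule ccontr)
    assume "\<not> lE < lG"
    then have "secular s ns lE \<le> secular s ns lG"
      using secular_strict_antimono[OF assms(3) pos(1) lG(1), of lE] by (cases "lG = lE") auto
    moreover obtain j where "j < c" "p < ns ! j" "ns ! j < M"
      using sizes(3) ne by (auto simp: ext_def)
    ultimately show False using comparison(2) lG lE by fastforce
  qed
  ultimately show ?thesis
    using largest_eigenvalue_join_cliques[OF assms(3) lG] largest_eigenvalue_join_cliques[OF assms(3) lE]
    unfolding join_cliques_def ext_def M_def by fastforce
qed

end
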